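(* Let $\mathcal D=(D,<,\rho)$ be a computable partially ordered set. Let $c:\{0,1\}^*\times\{0,1\}^*\to\{0,1\}^*$ be a total computable injective map, and let $J:\mathbb N\times\mathbb N\to\mathbb N$ and $M\in\mathbb N$ be such that $|c(p,q)|\le J(|p|,|q|)+M$ for all $p,q\in\{0,1\}^*$. Then $$K^D\le_{ct}J(K^{\mathcal D}_{\min},K^{\mathcal D}_{\max}).$$ In particular (with the convention $\log(0)=0$), $K^D\le_{ct}(K^{\mathcal D}_{\max}+\log(K^{\mathcal D}_{\max}))+(K^{\mathcal D}_{\min}+\log(K^{\mathcal D}_{\min}))$.
   Context: A computable partially ordered set is a triple $\mathcal D=(D,<,\rho)$ where $\rho:\mathbb N\to D$ is a bijection and $<$ is a strict partial order on $D$ with $\{(m,n):\rho(m)<\rho(n)\}$ computable; partial computability of maps into $D$ is via $\rho^{-1}$. For a partial $f:\{0,1\}^*\times\mathbb N\to D$ monotone increasing in its second argument on its domain, $\max^{\mathcal D}f$ is the partial function defined exactly at those $p$ for which $\{f(p,t):t,\ f(p,t)\text{ defined}\}$ is finite and non-empty, with value its maximum element. $\mathrm{Max}_{\mathrm{PR}}[\{0,1\}^*\to\mathcal D]$ is the class of all $\max^{\mathcal D}f$ with $f$ partial computable and monotone increasing in its second argument. For partial $\varphi:\{0,1\}^*\to D$, $K_\varphi(d)=\min\{|p|:\varphi(p)=d\}$. $K^D$ is $K_\varphi$ for $\varphi$ optimal among partial computable functions $\{0,1\}^*\to D$ (i.e. for every partial computable $\psi$, $K_\varphi\le K_\psi+c$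 wherever $K_\psi$ is defined, for some constant $c$). $K^{\mathcal D}_{\max}$ is $K_U$ for some $U$ optimal in the same sense within $\mathrm{Max}_{\mathrm{PR}}[\{0,1\}^*\to\mathcal D]$; $K^{\mathcal D}_{\min}$ is $K^{\mathcal D'}_{\max}$ for the reverse order $\mathcal D'=(D,>,\rho)$. All are total functions $D\to\mathbb N$ defined up to an additive constant. $f\le_{ct}g$ iff $\exists c\,\forall d\ f(d)\le g(d)+c$. *)

theory Defs
  imports Complex_Main
begin

datatype recf = Z | S | Proj nat | Comp recf "recf list" | Prim recf recf | Mn recf

inductive eval :: "recf \<Rightarrow> nat list \<Rightarrow> nat \<Rightarrow> bool" where
  evZ: "eval Z xs 0"
| evS: "eval S (x # xs) (Suc x)"
| evProj: "i < length xs \<Longrightarrow> eval (Proj i) xs (xs ! i)"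
| evComp: "list_all2 (\<lambda>g y. eval g xs y) gs ys \<Longrightarrow> eval f ys z \<Longrightarrow> eval (Comp f gs) xs z"
| evPrim0: "eval f xs z \<Longrightarrow> eval (Prim f g) (0 # xs) z"
| evPrimS: "eval (Prim f g) (n # xs) y \<Longrightarrow> eval g (y # n # xs) z \<Longrightarrow> eval (Prim f g) (Suc n # xs) z"
| evMn: "eval g (z # xs) 0 \<Longrightarrow> (\<forall>i<z. \<exists>y. 0 < y \<and> eval g (i # xs) y) \<Longrightarrow> eval (Mn g) xs z"

section \<open>Binary strings {0,1}^* as bool lists, coded bijectively by naturals\<close>

fun enc :: "bool list \<Rightarrow> nat" where
  "enc [] = 0"
| "enc (b # bs) = 2 * enc bs + (if b then 2 else 1)"

text \<open>D is the type 'd, lt the strict order, rho the numbering.\<close>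
definition computable_poset :: "('d \<Rightarrow> 'd \<Rightarrow> bool) \<Rightarrow> (nat \<Rightarrow> 'd) \<Rightarrow> bool" where
  "computable_poset lt rho \<longleftrightarrow>
     bij rho \<and> (\<forall>x. \<not> lt x x) \<and> (\<forall>x y z. lt x y \<longrightarrow> lt y z \<longrightarrow> lt x z) \<and>
     (\<exists>r. \<forall>m n z. eval r [m, n] z \<longleftrightarrow> z = (if lt (rho m) (rho n) then 1 else 0))"

text \<open>Partial computable maps {0,1}^* -> D and {0,1}^* x N -> D (via rho^-1).\<close>
definition pc_str :: "(nat \<Rightarrow> 'd) \<Rightarrow> (bool list \<Rightarrow> 'd option) \<Rightarrow> bool" where
  "pc_str rho \<phi> \<longleftrightarrow> (\<exists>r. \<forall>p z. eval r [enc p] z \<longleftrightarrow> \<phi> p = Some (rho z))"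

definition pc_str_nat :: "(nat \<Rightarrow> 'd) \<Rightarrow> (bool list \<Rightarrow> nat \<Rightarrow> 'd option) \<Rightarrow> bool" where
  "pc_str_nat rho f \<longleftrightarrow> (\<exists>r. \<forall>p t z. eval r [enc p, t] z \<longleftrightarrow> f p t = Some (rho z))"

definition total_computable2 :: "(bool list \<Rightarrow> bool list \<Rightarrow> bool list) \<Rightarrow> bool" where
  "total_computable2 c \<longleftrightarrow> (\<exists>r. \<forall>p q z. eval r [enc p, enc q] z \<longleftrightarrow> z = enc (c p q))"

definition PC :: "(nat \<Rightarrow> 'd) \<Rightarrow> (bool list \<Rightarrow> 'd option) set" where
  "PC rho = {\<phi>. pc_str rho \<phi>}"

definition mono_incr :: "('d \<Rightarrow> 'd \<Rightarrow> bool) \<Rightarrow> (bool list \<Rightarrow> nat \<Rightarrow> 'd option) \<Rightarrow> bool" where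
  "mono_incr lt f \<longleftrightarrow> (\<forall>p t t' a b. t \<le> t' \<longrightarrow> f p t = Some a \<longrightarrow> f p t' = Some b \<longrightarrow> (a = b \<or> lt a b))"

definition maxD :: "('d \<Rightarrow> 'd \<Rightarrow> bool) \<Rightarrow> (bool list \<Rightarrow> nat \<Rightarrow> 'd option) \<Rightarrow> bool list \<Rightarrow> 'd option" where
  "maxD lt f p = (let V = {d. \<exists>t. f p t = Some d} in
     if finite V \<and> V \<noteq> {} then Some (THE d. d \<in> V \<and> (\<forall>e\<in>V. e = d \<or> lt e d)) else None)"

definition MaxPR :: "('d \<Rightarrow> 'd \<Rightarrow> bool) \<Rightarrow> (nat \<Rightarrow> 'd) \<Rightarrow> (bool list \<Rightarrow> 'd option) set" where
  "MaxPR lt rho = {maxD lt f | f. pc_str_nat rho f \<and> mono_incr lt f}"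

definition Kc :: "(bool list \<Rightarrow> 'd option) \<Rightarrow> 'd \<Rightarrow> nat option" where
  "Kc \<phi> d = (if \<exists>p. \<phi> p = Some d then Some (LEAST n. \<exists>p. \<phi> p = Some d \<and> length p = n) else None)"

definition optimal_in :: "(bool list \<Rightarrow> 'd option) set \<Rightarrow> (bool list \<Rightarrow> 'd option) \<Rightarrow> bool" where
  "optimal_in C \<phi> \<longleftrightarrow> \<phi> \<in> C \<and>
     (\<forall>\<psi>\<in>C. \<exists>c. \<forall>d k. Kc \<psi> d = Some k \<longrightarrow> (\<exists>k'. Kc \<phi> d = Some k' \<and> k' \<le> k + c))"

definition logz :: "nat \<Rightarrow> real" where
  "logz n = (if n = 0 then 0 else log 2 (real n))"

end

theory Submission
  imports Defs "HOL-Library.Nat_Bijection"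
begin

text \<open>Write \<open>Umin = maxD (>) g\<close> and \<open>Umax = maxD (<) f\<close>. If \<open>p\<close> and \<open>q\<close> are shortest
  descriptions of \<open>d\<close> for \<open>Umin\<close> and \<open>Umax\<close>, then every value of \<open>g p\<close> lies above \<open>d\<close>
  and every value of \<open>f q\<close> below \<open>d\<close>, and both take the value \<open>d\<close>. So a single partial
  recursive machine that, on input \<open>c p q\<close>, dovetails the two approximations until they
  agree outputs exactly \<open>d\<close>, and optimality of \<open>\<phi>\<close> gives
  \<open>K \<phi> d \<le> |c p q| + O(1) \<le> J (Kmin d) (Kmax d) + O(1)\<close>. The logarithmic bound is the
  instance where \<open>c\<close> prefixes the shorter description by a prefix-free code of its length.
  Dovetailing is realised with an evaluator of Kleene terms whose searches are bounded
  by a fuel parameter; for every fixed term this evaluator is itself total recursive.\<close>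

inductive_cases eval_ZE: "eval Z xs z"
inductive_cases eval_SE: "eval S xs z"
inductive_cases eval_ProjE: "eval (Proj i) xs z"
inductive_cases eval_CompE: "eval (Comp f gs) xs z"
inductive_cases eval_PrimE: "eval (Prim f g) xs z"
inductive_cases eval_MnE: "eval (Mn g) xs z"

lemma list_all2_functional:
  "list_all2 (\<lambda>g y. P g y \<and> (\<forall>x. P g x \<longrightarrow> y = x)) gs ys \<Longrightarrow> list_all2 P gs ys' \<Longrightarrow> ys' = ys"
  by (induction gs arbitrary: ys ys') (auto simp: list_all2_Cons1)

lemma eval_deterministic: "eval r xs z \<Longrightarrow> eval r xs z' \<Longrightarrow> z = z'"
proof (induction arbitrary: z' rule: eval.induct)
  case (evComp xs gs ys f z)
  from evComp.prems obtain ys' where "list_all2 (\<lambda>g y. eval g xs y) gs ys'" and "eval f ys' z'"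
    by (blast elim: eval_CompE)
  moreover from evComp.IH(1) this(1) have "ys' = ys"
    by (rule list_all2_functional)
  ultimately show ?case using evComp.IH(2) by simp
next
  case (evPrimS f g n xs y z)
  from evPrimS.prems obtain y' where "eval (Prim f g) (n # xs) y'" "eval g (y' # n # xs) z'"
    by (blast elim: eval_PrimE)
  then show ?case using evPrimS.IH by auto
next
  case (evMn g z xs)
  from evMn.prems have z'0: "eval g (z' # xs) 0" and below_z': "\<forall>i<z'. \<exists>y>0. eval g (i # xs) y"
    by (auto elim: eval_MnE)
  show ?case
  proof (rule linorder_cases[of z z'])
    assume "z < z'"
    then show ?thesis using below_z' evMn.IH(1) by blast
  next
    assume "z' < z"
    then show ?thesis using z'0 evMn.IH(2) by fastforce
  qed
qed (blast elim: eval_ZE eval_SE eval_ProjE eval_PrimE)+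

section \<open>Total recursive functions and their closure properties\<close>

definition recursive :: "nat \<Rightarrow> (nat list \<Rightarrow> nat) \<Rightarrow> bool" where
  "recursive n F \<longleftrightarrow> (\<exists>r. \<forall>xs. length xs = n \<longrightarrow> eval r xs (F xs))"

lemma recursive_cong: "recursive n F \<Longrightarrow> (\<And>xs. length xs = n \<Longrightarrow> F xs = G xs) \<Longrightarrow> recursive n G"
  unfolding recursive_def by metis

lemma recursive_const: "recursive n (\<lambda>xs. k)"
proof -
  have "\<exists>r. \<forall>xs. eval r xs k"
  proof (induction k)
    case 0 then show ?case by (auto intro: evZ)
  next
    case (Suc k)
    then obtain r where "\<forall>xs. eval r xs k" by auto
    then have "\<forall>xs. eval (Comp S [r]) xs (Suc k)"
      by (intro allI evComp[where ys="[k]"]) (auto intro: evS)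
    then show ?case by blast
  qed
  then show ?thesis unfolding recursive_def by blast
qed

lemma recursive_proj: "i < n \<Longrightarrow> recursive n (\<lambda>xs. xs ! i)"
  unfolding recursive_def by (auto intro!: exI[of _ "Proj i"] evProj)

lemma list_all2_choice: "\<forall>x\<in>set xs. \<exists>y. P x y \<Longrightarrow> \<exists>ys. list_all2 P xs ys"
  by (induction xs) (auto simp: list_all2_Cons1)

lemma recursive_comp:
  assumes F: "recursive (length Gs) F" and Gs: "\<forall>G\<in>set Gs. recursive n G"
  shows "recursive n (\<lambda>xs. F (map (\<lambda>G. G xs) Gs))"
proof -
  obtain rf where rf: "\<forall>ys. length ys = length Gs \<longrightarrow> eval rf ys (F ys)"
    using F recursive_def by auto
  obtain rs where rs: "list_all2 (\<lambda>G r. \<forall>xs. length xs = n \<longrightarrow> eval r xs (G xs)) Gs rs"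
    using list_all2_choice[of Gs "\<lambda>G r. \<forall>xs. length xs = n \<longrightarrow> eval r xs (G xs)"] Gs
    unfolding recursive_def by blast
  have "eval (Comp rf rs) xs (F (map (\<lambda>G. G xs) Gs))" if "length xs = n" for xs
  proof (rule evComp)
    show "list_all2 (\<lambda>g y. eval g xs y) rs (map (\<lambda>G. G xs) Gs)"
      using rs by (induction rule: list_all2_induct) (simp_all add: that)
  qed (simp add: rf)
  then show ?thesis unfolding recursive_def by blast
qed

lemma recursive_comp1: "recursive 1 F \<Longrightarrow> recursive n G \<Longrightarrow> recursive n (\<lambda>xs. F [G xs])"
  using recursive_comp[of "[G]" F n] by simp

lemma recursive_comp2:
  "recursive 2 F \<Longrightarrow> recursive n G \<Longrightarrow> recursive n H \<Longrightarrow> recursive n (\<lambda>xs. F [G xs, H xs])"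
  using recursive_comp[of "[G, H]" F n] by (simp add: numeral_2_eq_2)

lemma recursive_comp3:
  "recursive 3 F \<Longrightarrow> recursive n G \<Longrightarrow> recursive n H \<Longrightarrow> recursive n K \<Longrightarrow>
   recursive n (\<lambda>xs. F [G xs, H xs, K xs])"
  using recursive_comp[of "[G, H, K]" F n] by (simp add: numeral_3_eq_3)

lemma recursive_prim:
  assumes "recursive n F" "recursive (Suc (Suc n)) G"
  shows "recursive (Suc n) (\<lambda>xs. rec_nat (F (tl xs)) (\<lambda>k y. G (y # k # tl xs)) (hd xs))"
proof -
  obtain rf where rf: "\<forall>xs. length xs = n \<longrightarrow> eval rf xs (F xs)"
    using assms(1) recursive_def by auto
  obtain rg where rg: "\<forall>xs. length xs = Suc (Suc n) \<longrightarrow> eval rg xs (G xs)"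
    using assms(2) recursive_def by auto
  have "eval (Prim rf rg) (k # xs) (rec_nat (F xs) (\<lambda>k y. G (y # k # xs)) k)" if "length xs = n" for k xs
  proof (induction k)
    case 0 show ?case using that rf by (simp add: evPrim0)
  next
    case (Suc k) show ?case using that rg by (simp add: evPrimS[OF Suc])
  qed
  then have "\<forall>xs. length xs = Suc n \<longrightarrow>
      eval (Prim rf rg) xs (rec_nat (F (tl xs)) (\<lambda>k y. G (y # k # tl xs)) (hd xs))"
    by (metis length_Suc_conv list.sel(1,3))
  then show ?thesis unfolding recursive_def by blast
qed

lemma recursive_prim1:
  assumes "recursive 0 F" "recursive 2 G"
  shows "recursive 1 (\<lambda>l. rec_nat (F []) (\<lambda>k y. G [y, k]) (l ! 0))"
proof -
  have "recursive 1 (\<lambda>xs. rec_nat (F (tl xs)) (\<lambda>k y. G (y # k # tl xs)) (hd xs))"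
    using recursive_prim[of 0 F G] assms by (simp add: numeral_2_eq_2)
  then show ?thesis by (rule recursive_cong) (auto simp: length_Suc_conv)
qed

lemma recursive_prim2:
  assumes "recursive 1 F" "recursive 3 G"
  shows "recursive 2 (\<lambda>l. rec_nat (F [l ! 1]) (\<lambda>k y. G [y, k, l ! 1]) (l ! 0))"
proof -
  have "recursive 2 (\<lambda>xs. rec_nat (F (tl xs)) (\<lambda>k y. G (y # k # tl xs)) (hd xs))"
    using recursive_prim[of 1 F G] assms by (simp add: eval_nat_numeral)
  then show ?thesis by (rule recursive_cong) (auto simp: length_Suc_conv numeral_2_eq_2)
qed

lemma recursive_prim3:
  assumes "recursive 2 F" "recursive 4 G"
  shows "recursive 3 (\<lambda>l. rec_nat (F [l ! 1, l ! 2]) (\<lambda>k y. G [y, k, l ! 1, l ! 2]) (l ! 0))"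
proof -
  have "recursive 3 (\<lambda>xs. rec_nat (F (tl xs)) (\<lambda>k y. G (y # k # tl xs)) (hd xs))"
    using recursive_prim[of 2 F G] assms by (simp add: numeral_3_eq_3 numeral_2_eq_2 eval_nat_numeral)
  then show ?thesis by (rule recursive_cong) (auto simp: length_Suc_conv numeral_3_eq_3)
qed

lemma recursive_mu:
  assumes "recursive (Suc n) G"
  shows "\<exists>r. \<forall>xs z. length xs = n \<longrightarrow>
    (eval r xs z \<longleftrightarrow> G (z # xs) = 0 \<and> (\<forall>i<z. G (i # xs) \<noteq> 0))"
proof -
  obtain rg where rg: "\<forall>xs. length xs = Suc n \<longrightarrow> eval rg xs (G xs)"
    using assms recursive_def by auto
  have "eval (Mn rg) xs z \<longleftrightarrow> G (z # xs) = 0 \<and> (\<forall>i<z. G (i # xs) \<noteq> 0)"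
    if "length xs = n" for xs z
  proof
    assume "eval (Mn rg) xs z"
    then have "eval rg (z # xs) 0" and "\<forall>i<z. \<exists>y>0. eval rg (i # xs) y"
      by (auto elim: eval_MnE)
    then show "G (z # xs) = 0 \<and> (\<forall>i<z. G (i # xs) \<noteq> 0)"
      using rg that by (metis eval_deterministic length_Cons less_numeral_extra(3))
  next
    assume "G (z # xs) = 0 \<and> (\<forall>i<z. G (i # xs) \<noteq> 0)"
    then show "eval (Mn rg) xs z"
      using rg that by (intro evMn) (metis length_Cons, metis length_Cons neq0_conv)
  qed
  then show ?thesis by blast
qed

lemma recursive_Suc: "recursive n F \<Longrightarrow> recursive n (\<lambda>xs. Suc (F xs))"
proof -
  have "recursive 1 (\<lambda>l. Suc (l ! 0))"
    unfolding recursive_def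
    by (rule exI[of _ S]) (metis One_nat_def evS length_0_conv length_Suc_conv nth_Cons_0)
  then show "recursive n F \<Longrightarrow> ?thesis" using recursive_comp1 by fastforce
qed

lemma recursive_add: "recursive n F \<Longrightarrow> recursive n G \<Longrightarrow> recursive n (\<lambda>xs. F xs + G xs)"
proof -
  have "recursive 2 (\<lambda>l. rec_nat (l ! 1) (\<lambda>k y. Suc y) (l ! 0))"
    using recursive_prim2[of "\<lambda>l. l ! 0" "\<lambda>l. Suc (l ! 0)"] by (simp add: recursive_proj recursive_Suc)
  moreover have "rec_nat b (\<lambda>k y. Suc y) a = a + b" for a b :: nat by (induction a) auto
  ultimately have "recursive 2 (\<lambda>l. l ! 0 + l ! 1)" by (auto elim!: recursive_cong)
  then show "recursive n F \<Longrightarrow> recursive n G \<Longrightarrow> ?thesis" using recursive_comp2 by fastforce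
qed

lemma recursive_mult: "recursive n F \<Longrightarrow> recursive n G \<Longrightarrow> recursive n (\<lambda>xs. F xs * G xs)"
proof -
  have "recursive 3 (\<lambda>l. l ! 0 + l ! 2)"
    by (intro recursive_add recursive_proj) simp_all
  then have "recursive 2 (\<lambda>l. rec_nat 0 (\<lambda>k y. y + l ! 1) (l ! 0))"
    using recursive_prim2[of "\<lambda>l. 0" "\<lambda>l. l ! 0 + l ! 2"] by (simp add: recursive_const)
  moreover have "rec_nat 0 (\<lambda>k y. y + b) a = a * b" for a b :: nat by (induction a) auto
  ultimately have "recursive 2 (\<lambda>l. l ! 0 * l ! 1)" by (auto elim!: recursive_cong)
  then show "recursive n F \<Longrightarrow> recursive n G \<Longrightarrow> ?thesis" using recursive_comp2 by fastforce
qed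

lemma recursive_pred: "recursive n F \<Longrightarrow> recursive n (\<lambda>xs. F xs - 1)"
proof -
  have "recursive 1 (\<lambda>l. rec_nat 0 (\<lambda>k y. k) (l ! 0))"
    using recursive_prim1[of "\<lambda>l. 0" "\<lambda>l. l ! 1"] by (simp add: recursive_const recursive_proj)
  moreover have "rec_nat 0 (\<lambda>k y. k) a = a - 1" for a :: nat by (induction a) auto
  ultimately have "recursive 1 (\<lambda>l. l ! 0 - 1)" by (auto elim!: recursive_cong)
  then show "recursive n F \<Longrightarrow> ?thesis" using recursive_comp1 by fastforce
qed

lemma recursive_diff: "recursive n F \<Longrightarrow> recursive n G \<Longrightarrow> recursive n (\<lambda>xs. F xs - G xs)"
proof -
  have "recursive 3 (\<lambda>l. l ! 0 - 1)"
    by (intro recursive_pred recursive_proj) simp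
  then have "recursive 2 (\<lambda>l. rec_nat (l ! 1) (\<lambda>k y. y - 1) (l ! 0))"
    using recursive_prim2[of "\<lambda>l. l ! 0" "\<lambda>l. l ! 0 - 1"] by (simp add: recursive_proj)
  moreover have "rec_nat b (\<lambda>k y. y - 1) a = b - a" for a b :: nat by (induction a) auto
  ultimately have "recursive 2 (\<lambda>l. l ! 1 - l ! 0)" by (auto elim!: recursive_cong)
  then show "recursive n F \<Longrightarrow> recursive n G \<Longrightarrow> ?thesis"
    using recursive_comp2[of "\<lambda>l. l ! 1 - l ! 0" n G F] by simp
qed

lemma recursive_power2: "recursive n F \<Longrightarrow> recursive n (\<lambda>xs. 2 ^ F xs)"
proof -
  have "recursive 2 (\<lambda>l. l ! 0 + l ! 0)"
    by (intro recursive_add recursive_proj) simp_all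
  then have "recursive 1 (\<lambda>l. rec_nat 1 (\<lambda>k y. y + y) (l ! 0))"
    using recursive_prim1[of "\<lambda>l. 1" "\<lambda>l. l ! 0 + l ! 0"] by (simp add: recursive_const)
  moreover have "rec_nat 1 (\<lambda>k y. y + y) a = (2::nat) ^ a" for a :: nat by (induction a) auto
  ultimately have "recursive 1 (\<lambda>l. 2 ^ (l ! 0))" by (auto elim!: recursive_cong)
  then show "recursive n F \<Longrightarrow> ?thesis" using recursive_comp1 by fastforce
qed

lemma recursive_if_zero:
  assumes "recursive n C" "recursive n A" "recursive n B"
  shows "recursive n (\<lambda>xs. if C xs = 0 then A xs else B xs)"
proof -
  have "recursive 3 (\<lambda>l. rec_nat (l ! 1) (\<lambda>k y. l ! 2) (l ! 0))"
    using recursive_prim3[of "\<lambda>l. l ! 0" "\<lambda>l. l ! 3"] by (simp add: recursive_proj)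
  moreover have "rec_nat b (\<lambda>k y. c) a = (if a = 0 then b else c)" for a b c :: nat by (cases a) auto
  ultimately have "recursive 3 (\<lambda>l. if l ! 0 = 0 then l ! 1 else l ! 2)" by (auto elim!: recursive_cong)
  from recursive_comp3[OF this assms] show ?thesis by (simp cong: if_cong)
qed

lemma recursive_if_le:
  "recursive n F \<Longrightarrow> recursive n G \<Longrightarrow> recursive n A \<Longrightarrow> recursive n B \<Longrightarrow>
   recursive n (\<lambda>xs. if F xs \<le> G xs then A xs else B xs)"
  using recursive_if_zero[OF recursive_diff] by simp

lemma recursive_if_eq:
  assumes "recursive n F" "recursive n G" "recursive n A" "recursive n B"
  shows "recursive n (\<lambda>xs. if F xs = G xs then A xs else B xs)"
proof -
  have "recursive n (\<lambda>xs. if (F xs - G xs) + (G xs - F xs) = 0 then A xs else B xs)"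
    by (intro recursive_if_zero recursive_add recursive_diff assms)
  then show ?thesis by (rule recursive_cong) auto
qed

lemma recursive_prod_list:
  "\<forall>g\<in>set gs. recursive n (G g) \<Longrightarrow> recursive n (\<lambda>l. prod_list (map (\<lambda>g. G g l) gs))"
  by (induction gs) (simp_all add: recursive_const recursive_mult)

lemma recursive_comp_drop:
  assumes "recursive (length Ps + m) F" "\<forall>P\<in>set Ps. recursive n P" "k + m \<le> n"
  shows "recursive n (\<lambda>l. F (map (\<lambda>P. P l) Ps @ take m (drop k l)))"
proof -
  let ?Gs = "Ps @ map (\<lambda>i l. l ! (i + k)) [0..<m]"
  have "recursive n (\<lambda>l. F (map (\<lambda>G. G l) ?Gs))"
    using assms by (intro recursive_comp) (auto intro!: recursive_proj)
  then show ?thesis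
  proof (rule recursive_cong)
    fix l :: "nat list" assume "length l = n"
    then have "map (\<lambda>i. l ! (i + k)) [0..<m] = take m (drop k l)"
      using assms(3) by (intro nth_equalityI) (auto simp: add.commute)
    then show "F (map (\<lambda>G. G l) ?Gs) = F (map (\<lambda>P. P l) Ps @ take m (drop k l))"
      by (simp add: o_def)
  qed
qed

lemma recursive_tl: "recursive (Suc n) F \<Longrightarrow> recursive (Suc (Suc n)) (\<lambda>l. F (tl l))"
  using recursive_comp_drop[of "[]" "Suc n" F "Suc (Suc n)" 1]
  by (simp add: drop_Suc) (erule recursive_cong, simp)

lemma recursive_Cons: "recursive (Suc n) H \<Longrightarrow> recursive n B \<Longrightarrow> recursive n (\<lambda>xs. H (B xs # xs))"
  using recursive_comp_drop[of "[B]" n H n 0] by simp (erule recursive_cong, simp)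

definition least_below :: "nat \<Rightarrow> (nat \<Rightarrow> bool) \<Rightarrow> nat" where
  "least_below b P = (if \<exists>i<b. P i then LEAST i. P i else b)"

lemma least_below_eqI:
  assumes "i < b" "P i" "\<forall>j<i. \<not> P j"
  shows "least_below b P = i"
proof -
  have "(LEAST i. P i) = i"
    using assms(2,3) by (intro Least_equality) (auto simp: not_less[symmetric])
  then show ?thesis using assms(1,2) unfolding least_below_def by auto
qed

lemma least_below_less:
  assumes "least_below b P < b"
  shows "P (least_below b P) \<and> (\<forall>j<least_below b P. \<not> P j)"
proof -
  have "\<exists>i<b. P i" using assms unfolding least_below_def by (auto split: if_splits)
  then show ?thesis unfolding least_below_def by (auto intro: LeastI dest: not_less_Least)
qed

lemma least_below_Suc:
  "least_below (Suc k) P = (if k \<le> least_below k P then (if P k then k else Suc k) else least_below k P)"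
proof (cases "\<exists>i<k. P i")
  case True
  then have "(LEAST i. P i) < k" by (meson LeastI less_le_trans not_less_Least not_less)
  with True show ?thesis by (auto simp: least_below_def less_Suc_eq)
next
  case False
  then have "P k \<Longrightarrow> (LEAST i. P i) = k" by (intro Least_equality) (auto simp: not_less[symmetric])
  with False show ?thesis by (auto simp: least_below_def less_Suc_eq)
qed

lemma recursive_least_below:
  assumes "recursive (Suc n) (\<lambda>l. if P l then 0 else 1)" "recursive n B"
  shows "recursive n (\<lambda>xs. least_below (B xs) (\<lambda>i. P (i # xs)))"
proof -
  let ?step = "\<lambda>l. if l ! 1 \<le> l ! 0 then (if P (tl l) then l ! 1 else Suc (l ! 1)) else l ! 0"
  have "recursive (Suc (Suc n)) (\<lambda>l. if l ! 1 \<le> l ! 0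
      then (if (if P (tl l) then 0 else 1) = (0::nat) then l ! 1 else Suc (l ! 1)) else l ! 0)"
    using assms(1) by (intro recursive_if_le recursive_if_zero recursive_proj recursive_Suc recursive_tl) auto
  then have step: "recursive (Suc (Suc n)) ?step"
    by (rule recursive_cong) simp
  have least_below_rec:
    "rec_nat 0 (\<lambda>k y. if k \<le> y then (if Q k then k else Suc k) else y) m = least_below m Q" for Q m
    by (induction m) (simp_all add: least_below_Suc, simp add: least_below_def)
  have "recursive (Suc n) (\<lambda>xs. least_below (hd xs) (\<lambda>i. P (i # tl xs)))"
    using recursive_prim[OF recursive_const[of n 0] step]
  proof (rule recursive_cong)
    fix xs :: "nat list"
    show "rec_nat 0 (\<lambda>k y. ?step (y # k # tl xs)) (hd xs) = least_below (hd xs) (\<lambda>i. P (i # tl xs))"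
      using least_below_rec[of "\<lambda>i. P (i # tl xs)" "hd xs"] by (simp cong: if_cong)
  qed
  from recursive_Cons[OF this assms(2)] show ?thesis by simp
qed

definition mu_fuel :: "(nat \<Rightarrow> nat) \<Rightarrow> nat \<Rightarrow> nat" where
  "mu_fuel h s = (if least_below s (\<lambda>i. h i \<le> 1) < s \<and> h (least_below s (\<lambda>i. h i \<le> 1)) = 1
     then Suc (least_below s (\<lambda>i. h i \<le> 1)) else 0)"

lemma mu_fuel_eq_Suc: "mu_fuel h s = Suc z \<longleftrightarrow> z < s \<and> h z = 1 \<and> (\<forall>j<z. 1 < h j)"
proof
  assume "mu_fuel h s = Suc z"
  then have "least_below s (\<lambda>i. h i \<le> 1) = z" "z < s" "h z = 1"
    unfolding mu_fuel_def by (auto split: if_splits)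
  then show "z < s \<and> h z = 1 \<and> (\<forall>j<z. 1 < h j)"
    using least_below_less[of s "\<lambda>i. h i \<le> 1"] by auto
next
  assume "z < s \<and> h z = 1 \<and> (\<forall>j<z. 1 < h j)"
  moreover then have "least_below s (\<lambda>i. h i \<le> 1) = z"
    by (intro least_below_eqI) (auto simp: not_le)
  ultimately show "mu_fuel h s = Suc z" unfolding mu_fuel_def by simp
qed

definition prim_fuel :: "nat \<Rightarrow> (nat \<Rightarrow> nat \<Rightarrow> nat) \<Rightarrow> nat \<Rightarrow> nat" where
  "prim_fuel u h k = rec_nat u (\<lambda>j y. if y = 0 then 0 else h j (y - 1)) k"

lemma prim_fuel_0 [simp]: "prim_fuel u h 0 = u"
  by (simp add: prim_fuel_def)

lemma prim_fuel_Suc [simp]: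
  "prim_fuel u h (Suc k) = (if prim_fuel u h k = 0 then 0 else h k (prim_fuel u h k - 1))"
  by (simp add: prim_fuel_def)

section \<open>Evaluation with bounded searches\<close>

text \<open>\<open>eval_fuel r s xs = Suc z\<close> records that \<open>r\<close> yields \<open>z\<close> on \<open>xs\<close> when every
  \<open>\<mu>\<close>-search is cut off below \<open>s\<close>; the value \<open>0\<close> records failure.\<close>

fun eval_fuel :: "recf \<Rightarrow> nat \<Rightarrow> nat list \<Rightarrow> nat" where
  "eval_fuel Z s xs = 1"
| "eval_fuel S s xs = (case xs of [] \<Rightarrow> 0 | x # _ \<Rightarrow> Suc (Suc x))"
| "eval_fuel (Proj i) s xs = (if i < length xs then Suc (xs ! i) else 0)"
| "eval_fuel (Comp f gs) s xs = (if 0 \<in> set (map (\<lambda>g. eval_fuel g s xs) gs) then 0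
      else eval_fuel f s (map (\<lambda>g. eval_fuel g s xs - 1) gs))"
| "eval_fuel (Prim f g) s xs = (case xs of [] \<Rightarrow> 0 | k # ys \<Rightarrow>
      prim_fuel (eval_fuel f s ys) (\<lambda>j y. eval_fuel g s (y # j # ys)) k)"
| "eval_fuel (Mn g) s xs = mu_fuel (\<lambda>i. eval_fuel g s (i # xs)) s"

lemma eval_fuel_sound: "eval_fuel r s xs = Suc z \<Longrightarrow> eval r xs z"
proof (induction r arbitrary: xs z)
  case (Comp f gs)
  let ?ys = "map (\<lambda>g. eval_fuel g s xs - 1) gs"
  from Comp.prems have nz: "\<forall>g\<in>set gs. eval_fuel g s xs \<noteq> 0"
    and f_result: "eval_fuel f s ?ys = Suc z"
    by (auto split: if_splits)
  from f_result have "eval f ?ys z" by (rule Comp.IH(1))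
  moreover have "list_all2 (\<lambda>g y. eval g xs y) gs ?ys"
    using nz by (auto simp: list_all2_conv_all_nth intro!: Comp.IH(2))
  ultimately show ?case by (intro evComp)
next
  case (Prim f g)
  then obtain k ys where xs: "xs = k # ys" by (cases xs) auto
  have "prim_fuel (eval_fuel f s ys) (\<lambda>j y. eval_fuel g s (y # j # ys)) k = Suc z
        \<Longrightarrow> eval (Prim f g) (k # ys) z" for z
  proof (induction k arbitrary: z)
    case 0 then show ?case by (intro evPrim0 Prim.IH(1)) simp
  next
    case (Suc k)
    let ?y = "prim_fuel (eval_fuel f s ys) (\<lambda>j y. eval_fuel g s (y # j # ys)) k"
    from Suc.prems have "?y = Suc (?y - 1)" and "eval_fuel g s ((?y - 1) # k # ys) = Suc z"
      by (auto split: if_splits)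
    then show ?case by (intro evPrimS Suc.IH Prim.IH(2))
  qed
  with Prim.prems show ?case unfolding xs by simp
next
  case (Mn g)
  then have z_result: "eval_fuel g s (z # xs) = Suc 0" and below: "\<forall>j<z. 1 < eval_fuel g s (j # xs)"
    by (simp_all add: mu_fuel_eq_Suc)
  have "\<exists>y>0. eval g (j # xs) y" if "j < z" for j
  proof -
    from that below have "eval_fuel g s (j # xs) = Suc (eval_fuel g s (j # xs) - 1)"
      and "0 < eval_fuel g s (j # xs) - 1"
      by auto
    then show ?thesis using Mn.IH by blast
  qed
  with Mn.IH[OF z_result] show ?case by (intro evMn) auto
qed (auto intro: evZ evS evProj split: list.splits if_splits)

lemma eval_fuel_complete: "eval r xs z \<Longrightarrow> \<forall>\<^sub>F s in sequentially. eval_fuel r s xs = Suc z"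
proof (induction rule: eval.induct)
  case (evComp xs gs ys f z)
  have "\<forall>i\<in>{..<length gs}. \<forall>\<^sub>F s in sequentially. eval_fuel (gs ! i) s xs = Suc (ys ! i)"
    using evComp.IH(1) by (simp add: list_all2_conv_all_nth)
  then have "\<forall>\<^sub>F s in sequentially. \<forall>i\<in>{..<length gs}. eval_fuel (gs ! i) s xs = Suc (ys ! i)"
    by (rule eventually_ball_finite[rotated]) simp
  moreover have "length ys = length gs"
    using evComp.IH(1) by (simp add: list_all2_lengthD)
  ultimately have "\<forall>\<^sub>F s in sequentially. map (\<lambda>g. eval_fuel g s xs) gs = map Suc ys"
    by (auto elim!: eventually_mono simp: list_eq_iff_nth_eq)
  then show ?case using evComp.IH(2)
  proof eventually_elim
    case (elim s)
    have "map (\<lambda>g. eval_fuel g s xs - 1) gs = map (\<lambda>x. x - 1) (map (\<lambda>g. eval_fuel g s xs) gs)"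
      by simp
    also have "\<dots> = ys" using elim(1) by (simp add: comp_def)
    finally have "map (\<lambda>g. eval_fuel g s xs - 1) gs = ys" .
    moreover have "0 \<notin> set (map (\<lambda>g. eval_fuel g s xs) gs)" using elim(1) by simp
    ultimately show ?case using elim(2) by (simp only: eval_fuel.simps(4) if_False)
  qed
next
  case (evPrimS f g n xs y z)
  from evPrimS.IH show ?case by eventually_elim simp
next
  case (evMn g z xs)
  have "\<forall>i\<in>{..<z}. \<forall>\<^sub>F s in sequentially. 1 < eval_fuel g s (i # xs)"
    using evMn.IH(2) by (fastforce elim: eventually_mono)
  then have "\<forall>\<^sub>F s in sequentially. \<forall>i\<in>{..<z}. 1 < eval_fuel g s (i # xs)"
    by (rule eventually_ball_finite[rotated]) simp
  with evMn.IH(1) eventually_gt_at_top[of z] show ?case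
    by eventually_elim (simp add: mu_fuel_eq_Suc)
qed simp_all

lemma recursive_eval_fuel_Comp:
  assumes f: "recursive (Suc (length gs)) (\<lambda>l. eval_fuel f (hd l) (tl l))"
    and gs: "\<forall>g\<in>set gs. recursive (Suc n) (\<lambda>l. eval_fuel g (hd l) (tl l))"
  shows "recursive (Suc n) (\<lambda>l. eval_fuel (Comp f gs) (hd l) (tl l))"
proof -
  let ?args = "\<lambda>l. map (\<lambda>g. eval_fuel g (hd l) (tl l) - 1) gs"
  let ?Gs = "(\<lambda>l. l ! 0) # map (\<lambda>g l. eval_fuel g (hd l) (tl l) - 1) gs"
  have "recursive (length ?Gs) (\<lambda>l. eval_fuel f (hd l) (tl l))" using f by simp
  moreover have "\<forall>G\<in>set ?Gs. recursive (Suc n) G"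
    using gs by (auto intro!: recursive_proj recursive_pred[unfolded One_nat_def])
  ultimately have "recursive (Suc n) (\<lambda>l. eval_fuel f (l ! 0) (?args l))"
    by (drule_tac recursive_comp) (simp_all add: comp_def)
  moreover have "recursive (Suc n) (\<lambda>l. prod_list (map (\<lambda>g. eval_fuel g (hd l) (tl l)) gs))"
    using gs by (intro recursive_prod_list) simp
  ultimately have "recursive (Suc n) (\<lambda>l. if prod_list (map (\<lambda>g. eval_fuel g (hd l) (tl l)) gs) = 0
      then 0 else eval_fuel f (l ! 0) (?args l))"
    by (intro recursive_if_zero recursive_const)
  then show ?thesis
    by (rule recursive_cong) (auto simp: prod_list_zero_iff length_Suc_conv simp del: set_map)
qed

lemma recursive_eval_fuel_Prim:
  assumes f: "recursive (Suc m) (\<lambda>l. eval_fuel f (hd l) (tl l))"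
    and g: "recursive (Suc (Suc (Suc m))) (\<lambda>l. eval_fuel g (hd l) (tl l))"
  shows "recursive (Suc (Suc m)) (\<lambda>l. eval_fuel (Prim f g) (hd l) (tl l))"
proof -
  let ?step = "\<lambda>l. if l ! 0 = 0 then 0 else eval_fuel g (l ! 2) ((l ! 0 - 1) # l ! 1 # drop 3 l)"
  let ?Ps = "[\<lambda>l. l ! 2, \<lambda>l. l ! 0 - 1, \<lambda>l. l ! 1]"
  have "recursive (length ?Ps + m) (\<lambda>l. eval_fuel g (hd l) (tl l))"
    using g by (simp add: eval_nat_numeral)
  moreover have "\<forall>P\<in>set ?Ps. recursive (Suc (Suc (Suc m))) P"
    by (auto intro!: recursive_proj recursive_pred[unfolded One_nat_def])
  ultimately have "recursive (Suc (Suc (Suc m)))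
      (\<lambda>l. eval_fuel g (l ! 2) ((l ! 0 - 1) # l ! 1 # take m (drop 3 l)))"
    by (drule_tac recursive_comp_drop[where k = 3]) simp_all
  then have "recursive (Suc (Suc (Suc m))) ?step"
    by (intro recursive_if_zero recursive_proj recursive_const) (auto elim!: recursive_cong)
  from recursive_prim[OF f this]
  have "recursive (length [\<lambda>l. l ! 1, \<lambda>l. l ! 0] + m) (\<lambda>xs. rec_nat (eval_fuel f (hd (tl xs)) (tl (tl xs)))
      (\<lambda>k y. ?step (y # k # tl xs)) (hd xs))"
    by simp
  from recursive_comp_drop[OF this, of "Suc (Suc m)" 2]
  have "recursive (Suc (Suc m)) (\<lambda>l. rec_nat (eval_fuel f (l ! 0) (take m (drop 2 l)))
      (\<lambda>k y. if y = 0 then 0 else eval_fuel g (l ! 0) ((y - 1) # k # take m (drop 2 l))) (l ! 1))"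
    by (simp add: recursive_proj cong: if_cong)
  then show ?thesis
  proof (rule recursive_cong)
    fix l :: "nat list" assume "length l = Suc (Suc m)"
    then obtain s k ys where "l = s # k # ys" "length ys = m"
      by (metis length_Suc_conv)
    then show "rec_nat (eval_fuel f (l ! 0) (take m (drop 2 l)))
        (\<lambda>k y. if y = 0 then 0 else eval_fuel g (l ! 0) ((y - 1) # k # take m (drop 2 l))) (l ! 1)
      = eval_fuel (Prim f g) (hd l) (tl l)"
      by (simp add: prim_fuel_def cong: if_cong)
  qed
qed

lemma recursive_eval_fuel_Mn:
  assumes g: "recursive (Suc (Suc n)) (\<lambda>l. eval_fuel g (hd l) (tl l))"
  shows "recursive (Suc n) (\<lambda>l. eval_fuel (Mn g) (hd l) (tl l))"
proof -
  define I where "I = (\<lambda>l. least_below (l ! 0) (\<lambda>i. eval_fuel g (l ! 0) (i # take n (drop 1 l)) \<le> 1))"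
  have "recursive (Suc (Suc n)) (\<lambda>l. eval_fuel g (l ! 1) (l ! 0 # take n (drop 2 l)))"
    using recursive_comp_drop[of "[\<lambda>l. l ! 1, \<lambda>l. l ! 0]" n "\<lambda>l. eval_fuel g (hd l) (tl l)"
        "Suc (Suc n)" 2] g
    by (simp add: recursive_proj)
  then have "recursive (Suc (Suc n))
      (\<lambda>l. if eval_fuel g (l ! 1) (l ! 0 # take n (drop 2 l)) \<le> 1 then 0 else 1)"
    by (intro recursive_if_le recursive_const)
  from recursive_least_below[OF this recursive_proj[of 0 "Suc n"]]
  have I: "recursive (Suc n) I"
    unfolding I_def by simp
  have "recursive (Suc n) (\<lambda>l. eval_fuel g (l ! 0) (I l # take n (drop 1 l)))"
    using recursive_comp_drop[of "[\<lambda>l. l ! 0, I]" n "\<lambda>l. eval_fuel g (hd l) (tl l)" "Suc n" 1] g I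
    by (simp add: recursive_proj)
  then have "recursive (Suc n) (\<lambda>l. if Suc (I l) \<le> l ! 0
      then (if eval_fuel g (l ! 0) (I l # take n (drop 1 l)) = 1 then Suc (I l) else 0) else 0)"
    by (intro recursive_if_le recursive_if_eq recursive_Suc I recursive_proj recursive_const) simp
  then show ?thesis
  proof (rule recursive_cong)
    fix l :: "nat list" assume "length l = Suc n"
    then obtain s xs where "l = s # xs" "length xs = n" by (metis length_Suc_conv)
    then show "(if Suc (I l) \<le> l ! 0
        then (if eval_fuel g (l ! 0) (I l # take n (drop 1 l)) = 1 then Suc (I l) else 0) else 0)
      = eval_fuel (Mn g) (hd l) (tl l)"
      by (simp add: I_def mu_fuel_def Suc_le_eq)
  qed
qed

lemma recursive_eval_fuel: "recursive (Suc n) (\<lambda>l. eval_fuel r (hd l) (tl l))"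
proof (induction r arbitrary: n)
  case Z show ?case using recursive_const[of "Suc n" 1] by simp
next
  case S show ?case
  proof (cases n)
    case 0 then show ?thesis
      by (intro recursive_cong[OF recursive_const[of "Suc n" 0]]) (auto simp: length_Suc_conv)
  next
    case (Suc m)
    have "recursive (Suc n) (\<lambda>l. Suc (Suc (l ! 1)))" using Suc by (intro recursive_Suc recursive_proj) simp
    then show ?thesis by (rule recursive_cong) (auto simp: Suc length_Suc_conv)
  qed
next
  case (Proj i) show ?case
  proof (cases "i < n")
    case True
    have "recursive (Suc n) (\<lambda>l. Suc (l ! Suc i))" using True by (intro recursive_Suc recursive_proj) simp
    then show ?thesis by (rule recursive_cong) (use \<open>i < n\<close> in \<open>auto simp: length_Suc_conv\<close>)
  next
    case False then show ?thesis
      by (intro recursive_cong[OF recursive_const[of "Suc n" 0]]) (use False in \<open>auto simp: length_Suc_conv\<close>)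
  qed
next
  case (Comp f gs) then show ?case by (intro recursive_eval_fuel_Comp) simp_all
next
  case (Prim f g) show ?case
  proof (cases n)
    case 0 then show ?thesis
      by (intro recursive_cong[OF recursive_const[of "Suc n" 0]]) (auto simp: length_Suc_conv)
  next
    case (Suc m) then show ?thesis using recursive_eval_fuel_Prim[OF Prim.IH] by simp
  qed
next
  case (Mn g) then show ?case by (rule recursive_eval_fuel_Mn)
qed

lemma recursive_prod_encode:
  assumes "recursive n F" "recursive n G"
  shows "recursive n (\<lambda>xs. prod_encode (F xs, G xs))"
proof -
  have "recursive 2 (\<lambda>l. l ! 0 + Suc (l ! 1))"
    by (intro recursive_add recursive_Suc recursive_proj) simp_all
  then have "recursive 1 (\<lambda>l. rec_nat 0 (\<lambda>k y. y + Suc k) (l ! 0))"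
    using recursive_prim1[of "\<lambda>l. 0" "\<lambda>l. l ! 0 + Suc (l ! 1)"] by (simp add: recursive_const)
  moreover have "rec_nat 0 (\<lambda>k y. y + Suc k) a = triangle a" for a by (induction a) auto
  ultimately have "recursive 1 (\<lambda>l. triangle (l ! 0))" by (auto elim!: recursive_cong)
  from recursive_comp1[OF this recursive_add[OF assms]]
  have "recursive n (\<lambda>xs. triangle (F xs + G xs) + F xs)"
    by (simp add: recursive_add assms)
  then show ?thesis by (simp add: prod_encode_def)
qed

lemma fst_prod_decode_least_below:
  "fst (prod_decode w) = least_below (Suc w) (\<lambda>a. least_below (Suc w) (\<lambda>b. prod_encode (a, b) = w) \<le> w)"
proof -
  obtain a b where w: "w = prod_encode (a, b)" by (metis prod_decode_inverse surj_pair)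
  have "a \<le> w" "b \<le> w" unfolding w by (rule le_prod_encode_1, rule le_prod_encode_2)
  have "least_below (Suc w) (\<lambda>b'. prod_encode (a', b') = w) \<le> w \<longleftrightarrow> a' = a" for a'
  proof
    assume "least_below (Suc w) (\<lambda>b'. prod_encode (a', b') = w) \<le> w"
    from least_below_less[OF this[folded less_Suc_eq_le]]
    have "prod_encode (a', least_below (Suc w) (\<lambda>b'. prod_encode (a', b') = w)) = prod_encode (a, b)"
      unfolding w by blast
    then show "a' = a" by (simp add: prod_encode_eq)
  next
    assume "a' = a"
    then have "least_below (Suc w) (\<lambda>b'. prod_encode (a', b') = w) = b"
      using \<open>b \<le> w\<close> unfolding w by (intro least_below_eqI) (auto simp: prod_encode_eq)
    then show "least_below (Suc w) (\<lambda>b'. prod_encode (a', b') = w) \<le> w" using \<open>b \<le> w\<close> by simp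
  qed
  then have "least_below (Suc w) (\<lambda>a'. least_below (Suc w) (\<lambda>b'. prod_encode (a', b') = w) \<le> w) = a"
    using \<open>a \<le> w\<close> by (intro least_below_eqI) auto
  then show ?thesis unfolding w by simp
qed

lemma snd_prod_decode_least_below:
  "snd (prod_decode w) = least_below (Suc w) (\<lambda>b. prod_encode (fst (prod_decode w), b) = w)"
proof -
  obtain a b where w: "w = prod_encode (a, b)" by (metis prod_decode_inverse surj_pair)
  have "b \<le> w" unfolding w by (rule le_prod_encode_2)
  then have "least_below (Suc w) (\<lambda>b'. prod_encode (a, b') = w) = b"
    unfolding w by (intro least_below_eqI) (auto simp: prod_encode_eq)
  then show ?thesis unfolding w by simp
qed

lemma recursive_fst_prod_decode: "recursive n F \<Longrightarrow> recursive n (\<lambda>xs. fst (prod_decode (F xs)))"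
proof -
  have "recursive (Suc 2) (\<lambda>l. if prod_encode (l ! 1, l ! 0) = l ! 2 then 0 else 1)"
    by (intro recursive_if_eq recursive_prod_encode recursive_proj recursive_const) simp_all
  from recursive_least_below[OF this, of "\<lambda>l. Suc (l ! 1)"]
  have inner: "recursive 2 (\<lambda>l. least_below (Suc (l ! 1)) (\<lambda>b. prod_encode (l ! 0, b) = l ! 1))"
    by (simp add: recursive_Suc recursive_proj)
  have "recursive (Suc 1) (\<lambda>l. if least_below (Suc (l ! 1)) (\<lambda>b. prod_encode (l ! 0, b) = l ! 1)
      \<le> l ! 1 then 0 else 1)"
    using inner by (intro recursive_if_le recursive_proj recursive_const) (simp_all add: numeral_2_eq_2)
  from recursive_least_below[OF this, of "\<lambda>l. Suc (l ! 0)"]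
  have "recursive 1 (\<lambda>l. fst (prod_decode (l ! 0)))"
    by (simp add: recursive_Suc recursive_proj fst_prod_decode_least_below)
  then show "recursive n F \<Longrightarrow> ?thesis" using recursive_comp1 by fastforce
qed

lemma recursive_snd_prod_decode: "recursive n F \<Longrightarrow> recursive n (\<lambda>xs. snd (prod_decode (F xs)))"
proof -
  have "recursive (Suc 1) (\<lambda>l. if prod_encode (fst (prod_decode (l ! 1)), l ! 0) = l ! 1 then 0 else 1)"
    by (intro recursive_if_eq recursive_prod_encode recursive_fst_prod_decode recursive_proj
        recursive_const) simp_all
  from recursive_least_below[OF this, of "\<lambda>l. Suc (l ! 0)"]
  have "recursive 1 (\<lambda>l. snd (prod_decode (l ! 0)))"
    by (simp add: recursive_Suc recursive_proj snd_prod_decode_least_below)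
  then show "recursive n F \<Longrightarrow> ?thesis" using recursive_comp1 by fastforce
qed

fun dec :: "nat \<Rightarrow> bool list" where
  "dec 0 = []"
| "dec (Suc n) = (if even n then False # dec (n div 2) else True # dec (n div 2))"

lemma enc_dec [simp]: "enc (dec n) = n"
  by (induction n rule: dec.induct) (auto elim!: evenE oddE)

lemma dec_enc [simp]: "dec (enc xs) = xs"
proof (induction xs)
  case (Cons b bs)
  have "enc (b # bs) = Suc (2 * enc bs + (if b then 1 else 0))" by simp
  then show ?case using Cons by (simp only: dec.simps) simp
qed simp

lemma inj_enc: "inj enc"
  by (metis dec_enc injI)

lemma enc_append: "enc (xs @ ys) = enc xs + 2 ^ length xs * enc ys"
  by (induction xs) (auto simp: algebra_simps)

lemma enc_replicate_True: "enc (replicate l True) + 2 = 2 ^ Suc l"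
  by (induction l) auto

lemma power_length_le_enc: "2 ^ length xs \<le> enc xs + 1"
  by (induction xs) auto

lemma enc_le_power_length: "enc xs + 2 \<le> 2 ^ Suc (length xs)"
  by (induction xs) auto

lemma length_dec_least_below: "length (dec u) = least_below (Suc u) (\<lambda>n. u + 2 \<le> 2 ^ Suc n)"
proof -
  let ?L = "length (dec u)"
  have lower: "2 ^ ?L \<le> u + 1" using power_length_le_enc[of "dec u"] by simp
  have "enc (dec u) + 2 \<le> 2 ^ Suc ?L" by (rule enc_le_power_length)
  moreover have "?L < Suc u" using less_exp[of ?L] lower by linarith
  moreover have "\<not> u + 2 \<le> 2 ^ Suc j" if "j < ?L" for j
  proof -
    have "2 ^ Suc j \<le> (2::nat) ^ ?L" using that by (intro power_increasing) simp_all
    then show ?thesis using lower by simp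
  qed
  ultimately show ?thesis by (intro least_below_eqI[symmetric]) simp_all
qed

lemma recursive_length_dec: "recursive n F \<Longrightarrow> recursive n (\<lambda>xs. length (dec (F xs)))"
proof -
  have "recursive (Suc 1) (\<lambda>l. if l ! 1 + 2 \<le> 2 ^ Suc (l ! 0) then 0 else 1)"
    by (intro recursive_if_le recursive_add recursive_power2 recursive_Suc recursive_proj
        recursive_const) simp_all
  from recursive_least_below[OF this, of "\<lambda>l. Suc (l ! 0)"]
  have "recursive 1 (\<lambda>l. length (dec (l ! 0)))"
    by (simp add: recursive_Suc recursive_proj length_dec_least_below)
  then show "recursive n F \<Longrightarrow> ?thesis" using recursive_comp1 by fastforce
qed

lemma recursive_of_total_computable2:
  assumes "total_computable2 c"
  shows "recursive 2 (\<lambda>l. enc (c (dec (l ! 0)) (dec (l ! 1))))"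
proof -
  obtain r where "\<forall>p q z. eval r [enc p, enc q] z \<longleftrightarrow> z = enc (c p q)"
    using assms unfolding total_computable2_def by blast
  then have "eval r [l ! 0, l ! 1] (enc (c (dec (l ! 0)) (dec (l ! 1))))" for l
    by (metis enc_dec)
  moreover have "length l = 2 \<Longrightarrow> l = [l ! 0, l ! 1]" for l :: "nat list"
    by (cases l; cases "tl l") (auto simp: numeral_2_eq_2)
  ultimately show ?thesis unfolding recursive_def by metis
qed

lemma total_computable2_intro:
  assumes "recursive 2 F" "\<And>p q. F [enc p, enc q] = enc (c p q)"
  shows "total_computable2 c"
proof -
  obtain r where r: "\<forall>l. length l = 2 \<longrightarrow> eval r l (F l)"
    using assms(1) unfolding recursive_def by blast
  have "eval r [enc p, enc q] z \<longleftrightarrow> z = enc (c p q)" for p q z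
    using r[rule_format, of "[enc p, enc q]"] assms(2) eval_deterministic by auto
  then show ?thesis unfolding total_computable2_def by blast
qed

section \<open>A pairing of strings with logarithmic overhead\<close>

definition prefix_code :: "nat \<Rightarrow> bool list" where
  "prefix_code m = replicate (length (dec m)) True @ False # dec m"

lemma replicate_True_False_append_eq:
  "replicate l True @ False # X = replicate l' True @ False # Y \<longleftrightarrow> l = l' \<and> X = Y"
proof (induction l arbitrary: l')
  case 0 then show ?case by (cases l') auto
next
  case (Suc l) then show ?case by (cases l') auto
qed

lemma prefix_code_append_eq: "prefix_code m @ X = prefix_code m' @ Y \<longleftrightarrow> m = m' \<and> X = Y"
proof
  assume "prefix_code m @ X = prefix_code m' @ Y"
  then have "length (dec m) = length (dec m')" and "dec m @ X = dec m' @ Y"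
    unfolding prefix_code_def by (simp_all add: replicate_True_False_append_eq)
  then have "dec m = dec m'" and "X = Y" by (simp_all add: append_eq_append_conv)
  then show "m = m' \<and> X = Y" by (metis enc_dec)
qed simp

lemma enc_prefix_code_append:
  "enc (prefix_code m @ X)
     = (2 ^ Suc (length (dec m)) - 2) + 2 ^ length (dec m) * (2 * (m + 2 ^ length (dec m) * enc X) + 1)"
  using enc_replicate_True[of "length (dec m)"] by (simp add: prefix_code_def enc_append)

text \<open>Only the length of the shorter argument needs to be coded prefix-free; this gives the
  overhead \<open>2 log (min |p| |q|) + O(1)\<close>.\<close>

definition log_pair :: "bool list \<Rightarrow> bool list \<Rightarrow> bool list" where
  "log_pair p q = (if length p \<le> length q then True # prefix_code (length p) @ p @ q
     else False # prefix_code (length q) @ q @ p)"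

lemma log_pair_inj: "log_pair p q = log_pair p' q' \<Longrightarrow> p = p' \<and> q = q'"
  unfolding log_pair_def
  by (auto split: if_splits simp: prefix_code_append_eq append_eq_append_conv)

lemma length_log_pair:
  "length (log_pair p q) = 2 + 2 * length (dec (min (length p) (length q))) + length p + length q"
  by (simp add: log_pair_def prefix_code_def)

lemma total_computable2_log_pair: "total_computable2 log_pair"
proof -
  define E where "E m x = (2 ^ Suc (length (dec m)) - 2)
      + 2 ^ length (dec m) * (2 * (m + 2 ^ length (dec m) * x) + 1)" for m x
  define code where "code u v = (if length (dec u) \<le> length (dec v)
      then 2 * E (length (dec u)) (u + 2 ^ length (dec u) * v) + 2
      else 2 * E (length (dec v)) (v + 2 ^ length (dec v) * u) + 1)" for u v
  have E: "recursive n (\<lambda>xs. E (M xs) (X xs))" if "recursive n M" "recursive n X" for n M X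
    unfolding E_def
    by (intro recursive_add recursive_mult recursive_diff recursive_power2 recursive_Suc
        recursive_length_dec recursive_const that)
  have rec: "recursive 2 (\<lambda>l. code (l ! 0) (l ! 1))"
    unfolding code_def
    by (intro recursive_if_le recursive_add recursive_mult E recursive_power2 recursive_length_dec
        recursive_proj recursive_const) simp_all
  have correct: "code (enc p) (enc q) = enc (log_pair p q)" for p q
  proof -
    have "enc (log_pair p q) = (if length p \<le> length q then 2 * E (length p) (enc (p @ q)) + 2
        else 2 * E (length q) (enc (q @ p)) + 1)"
      by (simp add: log_pair_def E_def enc_prefix_code_append)
    then show ?thesis by (simp add: code_def enc_append)
  qed
  show ?thesis by (rule total_computable2_intro[OF rec]) (simp add: correct)
qed

lemma length_dec_le_log: "0 < m \<Longrightarrow> real (length (dec m)) \<le> 1 + log 2 m"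
proof -
  assume "0 < m"
  have "2 ^ length (dec m) \<le> enc (dec m) + 1" by (rule power_length_le_enc)
  also have "\<dots> \<le> 2 * m" using \<open>0 < m\<close> by simp
  finally have "real (length (dec m)) \<le> log 2 (2 * m)" by (rule le_log2_of_power)
  then show ?thesis using \<open>0 < m\<close> by (simp add: log_mult)
qed

lemma length_log_pair_bound:
  "real (2 + 2 * length (dec (min a b)) + a + b) \<le> (real b + logz b) + (real a + logz a) + 4"
proof (cases "min a b = 0")
  case True
  have "0 \<le> logz n" for n by (simp add: logz_def)
  with True show ?thesis by simp
next
  case False
  then have "real (length (dec (min a b))) \<le> 1 + log 2 (min a b)" by (simp add: length_dec_le_log)
  moreover have "log 2 (min a b) \<le> logz a" and "log 2 (min a b) \<le> logz b"
    using False by (simp_all add: logz_def)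
  ultimately show ?thesis by linarith
qed

lemma finite_chain_has_max:
  assumes trans: "\<forall>x y z. lt x y \<longrightarrow> lt y z \<longrightarrow> lt x z"
  shows "finite V \<Longrightarrow> V \<noteq> {} \<Longrightarrow> \<forall>x\<in>V. \<forall>y\<in>V. x = y \<or> lt x y \<or> lt y x \<Longrightarrow>
    \<exists>d\<in>V. \<forall>e\<in>V. e = d \<or> lt e d"
proof (induction V rule: finite_ne_induct)
  case (insert x F)
  then obtain d where d: "d \<in> F" "\<forall>e\<in>F. e = d \<or> lt e d" by auto
  from insert.prems d(1) consider "x = d \<or> lt x d" | "lt d x" by auto
  then show ?case
  proof cases
    case 1 then show ?thesis using d by auto
  next
    case 2
    have "e = x \<or> lt e x" if "e \<in> insert x F" for e
    proof -
      from that d have "e = x \<or> e = d \<or> lt e d" by auto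
      with 2 trans show ?thesis by blast
    qed
    then show ?thesis by blast
  qed
qed simp

lemma maxD_SomeD:
  assumes irrefl: "\<forall>x. \<not> lt x x" and trans: "\<forall>x y z. lt x y \<longrightarrow> lt y z \<longrightarrow> lt x z"
    and mono: "mono_incr lt f" and max: "maxD lt f p = Some d"
  shows "(\<exists>t. f p t = Some d) \<and> (\<forall>t e. f p t = Some e \<longrightarrow> e = d \<or> lt e d)"
proof -
  define V where "V = {d. \<exists>t. f p t = Some d}"
  have V: "finite V \<and> V \<noteq> {}"
    using max unfolding maxD_def V_def[symmetric] Let_def by (metis option.distinct(1))
  then have d: "d = (THE d. d \<in> V \<and> (\<forall>e\<in>V. e = d \<or> lt e d))"
    using max unfolding maxD_def V_def[symmetric] Let_def by simp
  have "\<forall>x\<in>V. \<forall>y\<in>V. x = y \<or> lt x y \<or> lt y x"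
  proof (intro ballI)
    fix x y assume "x \<in> V" "y \<in> V"
    then obtain t t' where x: "f p t = Some x" and y: "f p t' = Some y" unfolding V_def by blast
    have ordered: "f p t = Some a \<Longrightarrow> f p t' = Some b \<Longrightarrow> a = b \<or> lt a b" if "t \<le> t'" for t t' a b
      using mono that unfolding mono_incr_def by blast
    consider "t \<le> t'" | "t' \<le> t" by linarith
    then show "x = y \<or> lt x y \<or> lt y x"
      by cases (use ordered x y in blast)+
  qed
  with V obtain d0 where d0: "d0 \<in> V" "\<forall>e\<in>V. e = d0 \<or> lt e d0"
    using finite_chain_has_max[OF trans] by blast
  moreover have "d' = d0" if "d' \<in> V" "\<forall>e\<in>V. e = d' \<or> lt e d'" for d'
  proof (rule ccontr)
    assume "d' \<noteq> d0"
    then have "lt d' d0" "lt d0 d'" using d0 that by auto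
    then show False using irrefl trans by blast
  qed
  ultimately have "d = d0" unfolding d by (intro the_equality) blast+
  then show ?thesis using d0 unfolding V_def by blast
qed

section \<open>Searching for a common value of two approximations\<close>

lemma recursive_search:
  assumes "recursive 2 T" "recursive 2 Out"
  shows "\<exists>R. (\<forall>x z. eval R [x] z \<longrightarrow> (\<exists>w. T [w, x] = 0 \<and> z = Out [w, x]))
           \<and> (\<forall>x w. T [w, x] = 0 \<longrightarrow> (\<exists>z. eval R [x] z))"
proof -
  obtain rM where rM: "\<forall>xs z. length xs = 1 \<longrightarrow>
      (eval rM xs z \<longleftrightarrow> T (z # xs) = 0 \<and> (\<forall>i<z. T (i # xs) \<noteq> 0))"
    using recursive_mu[of 1 T] assms(1) by (auto simp: numeral_2_eq_2)
  obtain rO where rO: "\<forall>xs. length xs = 2 \<longrightarrow> eval rO xs (Out xs)"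
    using assms(2) unfolding recursive_def by blast
  let ?R = "Comp rO [rM, Proj 0]"
  have "\<exists>w. T [w, x] = 0 \<and> z = Out [w, x]" if "eval ?R [x] z" for x z
  proof -
    from that obtain ys where args: "list_all2 (\<lambda>g y. eval g [x] y) [rM, Proj 0] ys"
      and "eval rO ys z"
      by (rule eval_CompE) simp
    from args obtain w x' where "ys = [w, x']" and w: "eval rM [x] w" and "eval (Proj 0) [x] x'"
      by (auto simp: list_all2_Cons1)
    moreover from this(3) have "x' = x" by (rule eval_ProjE) simp
    ultimately have "eval rO [w, x] z" using \<open>eval rO ys z\<close> by simp
    moreover have "eval rO [w, x] (Out [w, x])" using rO by simp
    ultimately have "z = Out [w, x]" by (rule eval_deterministic)
    moreover have "T [w, x] = 0" using w rM by simp
    ultimately show ?thesis by blast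
  qed
  moreover have "\<exists>z. eval ?R [x] z" if "T [w, x] = 0" for x w
  proof -
    define w0 where "w0 = (LEAST w. T [w, x] = 0)"
    have "T [w0, x] = 0" "\<forall>i<w0. T [i, x] \<noteq> 0"
      unfolding w0_def using that by (auto intro: LeastI dest: not_less_Least)
    then have "eval rM [x] w0" using rM by simp
    moreover have "eval (Proj 0) [x] x" using evProj[of 0 "[x]"] by simp
    ultimately have "eval ?R [x] (Out [w0, x])" using rO by (intro evComp[where ys = "[w0, x]"]) simp_all
    then show ?thesis by blast
  qed
  ultimately show ?thesis by blast
qed

lemma pc_str_eval:
  assumes "inj rho"
  shows "pc_str rho (\<lambda>p. if \<exists>z. eval R [enc p] z then Some (rho (THE z. eval R [enc p] z)) else None)"
proof -
  have "(THE z. eval R [enc p] z) = z" if "eval R [enc p] z" for p z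
    using that eval_deterministic by blast
  then show ?thesis
    unfolding pc_str_def using assms by (auto intro!: exI[of _ R] dest: injD)
qed

text \<open>Dovetailing: search for \<open>\<langle>u, v, t, t', s\<rangle>\<close> with \<open>x = enc (c (dec u) (dec v))\<close> such that,
  with \<open>\<mu>\<close>-searches cut off below \<open>s\<close>, both approximations return the same value.\<close>

lemma search_common_value:
  assumes g: "pc_str_nat rho g" and f: "pc_str_nat rho f" and c: "total_computable2 c"
  shows "\<exists>R. (\<forall>x z. eval R [x] z \<longrightarrow>
                (\<exists>p q t t'. x = enc (c p q) \<and> g p t = Some (rho z) \<and> f q t' = Some (rho z)))
          \<and> (\<forall>p q t t' z. g p t = Some (rho z) \<longrightarrow> f q t' = Some (rho z) \<longrightarrow>
                (\<exists>z'. eval R [enc (c p q)] z'))"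
proof -
  obtain rg where rg: "\<forall>p t z. eval rg [enc p, t] z \<longleftrightarrow> g p t = Some (rho z)"
    using g unfolding pc_str_nat_def by blast
  obtain rf where rf: "\<forall>p t z. eval rf [enc p, t] z \<longleftrightarrow> f p t = Some (rho z)"
    using f unfolding pc_str_nat_def by blast
  define u where "u w = fst (prod_decode w)" for w
  define v where "v w = fst (prod_decode (snd (prod_decode w)))" for w
  define t where "t w = fst (prod_decode (snd (prod_decode (snd (prod_decode w)))))" for w
  define t' where "t' w = fst (prod_decode (snd (prod_decode (snd (prod_decode (snd (prod_decode w)))))))" for w
  define s where "s w = snd (prod_decode (snd (prod_decode (snd (prod_decode (snd (prod_decode w)))))))" for w
  define G where "G w = eval_fuel rg (s w) [u w, t w]" for w
  define F where "F w = eval_fuel rf (s w) [v w, t' w]" for w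
  define T :: "nat list \<Rightarrow> nat" where "T l = (if enc (c (dec (u (l ! 0))) (dec (v (l ! 0)))) = l ! 1
      then (if G (l ! 0) = 0 then 1 else if G (l ! 0) = F (l ! 0) then 0 else 1) else 1)" for l
  have parts: "recursive 2 (\<lambda>l. P (l ! 0))" if "P \<in> {u, v, t, t', s}" for P
    using that unfolding u_def v_def t_def t'_def s_def
    by (auto intro!: recursive_fst_prod_decode recursive_snd_prod_decode recursive_proj)
  have fuel: "recursive 3 (\<lambda>l. eval_fuel r (hd l) (tl l))" for r
    using recursive_eval_fuel[of 2 r] by simp
  have G: "recursive 2 (\<lambda>l. G (l ! 0))" and "recursive 2 (\<lambda>l. F (l ! 0))"
    unfolding G_def F_def using recursive_comp3[OF fuel] parts by auto
  then have "recursive 2 T"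
    unfolding T_def using recursive_comp2[OF recursive_of_total_computable2[OF c]] parts
    by (auto intro!: recursive_if_eq recursive_if_zero recursive_proj recursive_const)
  from recursive_search[OF this recursive_pred[OF G]] obtain R where
    sound: "\<forall>x z. eval R [x] z \<longrightarrow> (\<exists>w. T [w, x] = 0 \<and> z = G w - 1)" and
    complete: "\<forall>x w. T [w, x] = 0 \<longrightarrow> (\<exists>z. eval R [x] z)"
    by auto
  have "\<exists>p q t t'. x = enc (c p q) \<and> g p t = Some (rho z) \<and> f q t' = Some (rho z)"
    if "eval R [x] z" for x z
  proof -
    from sound that obtain w where "T [w, x] = 0" and z: "z = G w - 1" by blast
    then have x: "x = enc (c (dec (u w)) (dec (v w)))" and "G w = Suc z" and "F w = Suc z"
      unfolding T_def by (auto split: if_splits)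
    then have "eval rg [u w, t w] z" and "eval rf [v w, t' w] z"
      unfolding G_def F_def by (auto intro: eval_fuel_sound)
    then show ?thesis using x rg rf by (metis enc_dec)
  qed
  moreover have "\<exists>z'. eval R [enc (c p q)] z'"
    if "g p ta = Some (rho z)" "f q tb = Some (rho z)" for p q ta tb z
  proof -
    from that rg rf have "eval rg [enc p, ta] z" "eval rf [enc q, tb] z" by auto
    then have "\<forall>\<^sub>F n in sequentially. eval_fuel rg n [enc p, ta] = Suc z \<and> eval_fuel rf n [enc q, tb] = Suc z"
      by (intro eventually_conj eval_fuel_complete)
    then obtain n where "eval_fuel rg n [enc p, ta] = Suc z" "eval_fuel rf n [enc q, tb] = Suc z"
      by (auto simp: eventually_sequentially)
    then have "T [prod_encode (enc p, prod_encode (enc q, prod_encode (ta, prod_encode (tb, n)))), enc (c p q)] = 0"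
      unfolding T_def G_def F_def u_def v_def t_def t'_def s_def by simp
    then show ?thesis using complete by blast
  qed
  ultimately show ?thesis by blast
qed

lemma pc_str_meet:
  fixes lt :: "'d \<Rightarrow> 'd \<Rightarrow> bool"
  assumes poset: "computable_poset lt rho" and c: "total_computable2 c"
    and c_inj: "\<forall>p q p' q'. c p q = c p' q' \<longrightarrow> p = p' \<and> q = q'"
    and g: "pc_str_nat rho g" "mono_incr (\<lambda>x y. lt y x) g"
    and f: "pc_str_nat rho f" "mono_incr lt f"
  shows "\<exists>\<psi>. pc_str rho \<psi> \<and>
    (\<forall>p q d. maxD (\<lambda>x y. lt y x) g p = Some d \<longrightarrow> maxD lt f q = Some d \<longrightarrow> \<psi> (c p q) = Some d)"
proof -
  have "bij rho" and irrefl: "\<forall>x. \<not> lt x x" and trans: "\<forall>x y z. lt x y \<longrightarrow> lt y z \<longrightarrow> lt x z"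
    using poset unfolding computable_poset_def by auto
  obtain R where
    sound: "\<forall>x z. eval R [x] z \<longrightarrow> (\<exists>p q t t'. x = enc (c p q) \<and> g p t = Some (rho z) \<and> f q t' = Some (rho z))"
    and complete: "\<forall>p q t t' z. g p t = Some (rho z) \<longrightarrow> f q t' = Some (rho z) \<longrightarrow> (\<exists>z'. eval R [enc (c p q)] z')"
    using search_common_value[OF g(1) f(1) c] by blast
  define \<psi> where "\<psi> p = (if \<exists>z. eval R [enc p] z then Some (rho (THE z. eval R [enc p] z)) else None)" for p
  have "\<psi> (c p q) = Some d"
    if max_g: "maxD (\<lambda>x y. lt y x) g p = Some d" and max_f: "maxD lt f q = Some d" for p q d
  proof -
    have trans': "\<forall>x y z. lt y x \<longrightarrow> lt z y \<longrightarrow> lt z x"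
      using trans by blast
    obtain t where t: "g p t = Some d" and above: "\<forall>t e. g p t = Some e \<longrightarrow> e = d \<or> lt d e"
      using maxD_SomeD[where lt = "\<lambda>x y. lt y x", OF irrefl trans' g(2) max_g] by blast
    obtain t' where t': "f q t' = Some d" and below: "\<forall>t e. f q t = Some e \<longrightarrow> e = d \<or> lt e d"
      using maxD_SomeD[OF irrefl trans f(2) max_f] by blast
    have "rho (inv rho d) = d" using \<open>bij rho\<close> by (simp add: bij_is_surj surj_f_inv_f)
    with t t' have "g p t = Some (rho (inv rho d))" "f q t' = Some (rho (inv rho d))" by simp_all
    with complete have ex: "\<exists>z. eval R [enc (c p q)] z" by blast
    then obtain z where z: "eval R [enc (c p q)] z" ..
    with sound obtain p' q' ta tb where "enc (c p q) = enc (c p' q')"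
      and g_z: "g p' ta = Some (rho z)" and f_z: "f q' tb = Some (rho z)"
      by blast
    then have "c p q = c p' q'" using inj_enc by (simp add: inj_eq)
    then have "p' = p" "q' = q" using c_inj by blast+
    have "rho z = d"
    proof (rule ccontr)
      assume "rho z \<noteq> d"
      then have "lt d (rho z)" "lt (rho z) d"
        using above below g_z f_z \<open>p' = p\<close> \<open>q' = q\<close> by blast+
      then show False using irrefl trans by blast
    qed
    moreover have "(THE z. eval R [enc (c p q)] z) = z" using z eval_deterministic by blast
    ultimately show ?thesis by (simp add: \<psi>_def ex)
  qed
  moreover have "pc_str rho \<psi>"
    unfolding \<psi>_def using \<open>bij rho\<close> by (intro pc_str_eval bij_is_inj)
  ultimately show ?thesis by blast
qed

lemma Kc_le_length:
  assumes "\<phi> p = Some d"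
  shows "\<exists>k. Kc \<phi> d = Some k \<and> k \<le> length p"
proof -
  have "(LEAST n. \<exists>p. \<phi> p = Some d \<and> length p = n) \<le> length p"
    using assms by (intro Least_le) blast
  then show ?thesis using assms unfolding Kc_def by auto
qed

lemma Kc_SomeD:
  assumes "Kc \<phi> d = Some k"
  shows "\<exists>p. \<phi> p = Some d \<and> length p = k"
proof -
  have ex: "\<exists>p. \<phi> p = Some d"
    using assms unfolding Kc_def by (cases "\<exists>p. \<phi> p = Some d") auto
  then have k: "k = (LEAST n. \<exists>p. \<phi> p = Some d \<and> length p = n)"
    using assms unfolding Kc_def by simp
  from ex have "\<exists>n p. \<phi> p = Some d \<and> length p = n" by blast
  then have "\<exists>p. \<phi> p = Some d \<and> length p = (LEAST n. \<exists>p. \<phi> p = Some d \<and> length p = n)"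
    by (rule LeastI_ex)
  then show ?thesis unfolding k .
qed

lemma const_in_MaxPR:
  assumes "bij rho"
  shows "maxD lt (\<lambda>p t. Some d) \<in> MaxPR lt rho" and "maxD lt (\<lambda>p t. Some d) p = Some d"
proof -
  obtain r where r: "\<forall>xs. length xs = 2 \<longrightarrow> eval r xs (inv rho d)"
    using recursive_const[of 2 "inv rho d"] unfolding recursive_def by blast
  have "rho (inv rho d) = d" and "inj rho"
    using assms by (simp_all add: bij_is_surj surj_f_inv_f bij_is_inj)
  have "eval r [enc p, t] z \<longleftrightarrow> Some d = Some (rho z)" for p t z
  proof
    assume "eval r [enc p, t] z"
    then have "z = inv rho d" using r eval_deterministic by fastforce
    then show "Some d = Some (rho z)" using \<open>rho (inv rho d) = d\<close> by simp
  next
    assume "Some d = Some (rho z)"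
    then show "eval r [enc p, t] z" using r \<open>inj rho\<close> by (simp add: inv_f_f)
  qed
  then have "pc_str_nat rho (\<lambda>p t. Some d)" unfolding pc_str_nat_def by blast
  moreover have "mono_incr lt (\<lambda>p t. Some d)" unfolding mono_incr_def by simp
  ultimately show "maxD lt (\<lambda>p t. Some d) \<in> MaxPR lt rho" unfolding MaxPR_def by blast
  show "maxD lt (\<lambda>p t. Some d) p = Some d" unfolding maxD_def by auto
qed

lemma Kc_optimal_MaxPR_defined:
  assumes "bij rho" "optimal_in (MaxPR lt rho) U"
  shows "\<exists>a. Kc U d = Some a"
proof -
  from assms(2) const_in_MaxPR(1)[OF assms(1)] obtain C where
    "\<forall>d' k. Kc (maxD lt (\<lambda>p t. Some d)) d' = Some k \<longrightarrow> (\<exists>k'. Kc U d' = Some k' \<and> k' \<le> k + C)"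
    unfolding optimal_in_def by blast
  moreover obtain k where "Kc (maxD lt (\<lambda>p t. Some d)) d = Some k"
    using Kc_le_length[of "maxD lt (\<lambda>p t. Some d)" "[]" d] const_in_MaxPR(2)[OF assms(1)] by blast
  ultimately show ?thesis by blast
qed

lemma Kc_le_pairing:
  fixes lt :: "'d \<Rightarrow> 'd \<Rightarrow> bool"
  assumes poset: "computable_poset lt rho" and c: "total_computable2 c"
    and c_inj: "\<forall>p q p' q'. c p q = c p' q' \<longrightarrow> p = p' \<and> q = q'"
    and c_length: "\<forall>p q. length (c p q) \<le> B (length p) (length q)"
    and opt: "optimal_in (PC rho) \<phi>"
    and opt_max: "optimal_in (MaxPR lt rho) Umax"
    and opt_min: "optimal_in (MaxPR (\<lambda>x y. lt y x) rho) Umin"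
  shows "\<exists>C. \<forall>d. \<exists>k a b. Kc \<phi> d = Some k \<and> Kc Umin d = Some a \<and> Kc Umax d = Some b \<and> k \<le> B a b + C"
proof -
  have "bij rho" using poset unfolding computable_poset_def by blast
  obtain g where Umin: "Umin = maxD (\<lambda>x y. lt y x) g"
    and g: "pc_str_nat rho g" "mono_incr (\<lambda>x y. lt y x) g"
    using opt_min unfolding optimal_in_def MaxPR_def by blast
  obtain f where Umax: "Umax = maxD lt f" and f: "pc_str_nat rho f" "mono_incr lt f"
    using opt_max unfolding optimal_in_def MaxPR_def by blast
  obtain \<psi> where "pc_str rho \<psi>"
    and \<psi>: "\<forall>p q d. Umin p = Some d \<longrightarrow> Umax q = Some d \<longrightarrow> \<psi> (c p q) = Some d"
    using pc_str_meet[OF poset c c_inj g f] unfolding Umin Umax by blast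
  then obtain C where C: "\<forall>d k. Kc \<psi> d = Some k \<longrightarrow> (\<exists>k'. Kc \<phi> d = Some k' \<and> k' \<le> k + C)"
    using opt unfolding optimal_in_def PC_def by blast
  have "\<exists>k a b. Kc \<phi> d = Some k \<and> Kc Umin d = Some a \<and> Kc Umax d = Some b \<and> k \<le> B a b + C" for d
  proof -
    obtain a b where a: "Kc Umin d = Some a" and b: "Kc Umax d = Some b"
      using Kc_optimal_MaxPR_defined[OF \<open>bij rho\<close> opt_min] Kc_optimal_MaxPR_defined[OF \<open>bij rho\<close> opt_max]
      by blast
    obtain p q where p: "Umin p = Some d" "length p = a" and q: "Umax q = Some d" "length q = b"
      using Kc_SomeD[OF a] Kc_SomeD[OF b] by blast
    obtain k' where "Kc \<psi> d = Some k'" "k' \<le> length (c p q)"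
      using Kc_le_length[of \<psi> "c p q" d] \<psi> p q by blast
    moreover have "length (c p q) \<le> B a b" using c_length p q by blast
    ultimately obtain k where "Kc \<phi> d = Some k" "k \<le> B a b + C" using C by fastforce
    with a b show ?thesis by blast
  qed
  then show ?thesis by blast
qed

lemma Kc_le_logz_bound:
  fixes lt :: "'d \<Rightarrow> 'd \<Rightarrow> bool"
  assumes "computable_poset lt rho" "optimal_in (PC rho) \<phi>"
    and "optimal_in (MaxPR lt rho) Umax" "optimal_in (MaxPR (\<lambda>x y. lt y x) rho) Umin"
  shows "\<exists>C::real. \<forall>d. \<exists>k a b. Kc \<phi> d = Some k \<and> Kc Umin d = Some a \<and> Kc Umax d = Some b
    \<and> real k \<le> (real b + logz b) + (real a + logz a) + C"
proof -
  define B where "B a b = 2 + 2 * length (dec (min a b)) + a + b" for a b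
  have "\<forall>p q p' q'. log_pair p q = log_pair p' q' \<longrightarrow> p = p' \<and> q = q'"
    using log_pair_inj by blast
  moreover have "\<forall>p q. length (log_pair p q) \<le> B (length p) (length q)"
    unfolding B_def by (simp add: length_log_pair)
  ultimately obtain C where C: "\<forall>d. \<exists>k a b. Kc \<phi> d = Some k \<and> Kc Umin d = Some a
      \<and> Kc Umax d = Some b \<and> k \<le> B a b + C"
    using Kc_le_pairing[OF assms(1) total_computable2_log_pair _ _ assms(2-4)] by blast
  have "\<exists>k a b. Kc \<phi> d = Some k \<and> Kc Umin d = Some a \<and> Kc Umax d = Some b
      \<and> real k \<le> (real b + logz b) + (real a + logz a) + (C + 4)" for d
  proof -
    from C obtain k a b where "Kc \<phi> d = Some k" "Kc Umin d = Some a" "Kc Umax d = Some b"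
      and "k \<le> B a b + C"
      by blast
    moreover from this(4) have "real k \<le> real (2 + 2 * length (dec (min a b)) + a + b) + real C"
      unfolding B_def by (simp only: of_nat_add[symmetric] of_nat_le_iff)
    then have "real k \<le> (real b + logz b) + (real a + logz a) + (C + 4)"
      using length_log_pair_bound[of a b] by linarith
    ultimately show ?thesis by blast
  qed
  then show ?thesis by blast
qed

theorem mainTheorem4:
  fixes lt :: "'d \<Rightarrow> 'd \<Rightarrow> bool" and rho :: "nat \<Rightarrow> 'd"
    and c :: "bool list \<Rightarrow> bool list \<Rightarrow> bool list"
    and J :: "nat \<Rightarrow> nat \<Rightarrow> nat" and M :: nat
    and \<phi> Umax Umin :: "bool list \<Rightarrow> 'd option"
  assumes "computable_poset lt rho"
    and "total_computable2 c"
    and "\<forall>p q p' q'. c p q = c p' q' \<longrightarrow> p = p' \<and> q = q'"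
    and "\<forall>p q. length (c p q) \<le> J (length p) (length q) + M"
    and "optimal_in (PC rho) \<phi>"
    and "optimal_in (MaxPR lt rho) Umax"
    and "optimal_in (MaxPR (\<lambda>x y. lt y x) rho) Umin"
  shows "(\<exists>C. \<forall>d. \<exists>k a b. Kc \<phi> d = Some k \<and> Kc Umin d = Some a \<and> Kc Umax d = Some b
                        \<and> k \<le> J a b + C)
       \<and> (\<exists>C::real. \<forall>d. \<exists>k a b. Kc \<phi> d = Some k \<and> Kc Umin d = Some a \<and> Kc Umax d = Some b
                        \<and> real k \<le> (real b + logz b) + (real a + logz a) + C)"
proof
  obtain C where "\<forall>d. \<exists>k a b. Kc \<phi> d = Some k \<and> Kc Umin d = Some a \<and> Kc Umax d = Some b
      \<and> k \<le> J a b + M + C"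
    using Kc_le_pairing[of lt rho c "\<lambda>a b. J a b + M"] assms by blast
  then show "\<exists>C. \<forall>d. \<exists>k a b. Kc \<phi> d = Some k \<and> Kc Umin d = Some a \<and> Kc Umax d = Some b
      \<and> k \<le> J a b + C"
    by (intro exI[of _ "M + C"]) (simp add: add.assoc)
next
  show "\<exists>C::real. \<forall>d. \<exists>k a b. Kc \<phi> d = Some k \<and> Kc Umin d = Some a \<and> Kc Umax d = Some b
      \<and> real k \<le> (real b + logz b) + (real a + logz a) + C"
    using Kc_le_logz_bound assms(1,5-7) by blast
qed

end
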